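(* Let $\mathbf{L}=(L,\le)$ be a finite join-semilattice with greatest element $1_{\mathbf{L}}$, let $n\in\mathbb{N}$, and let $\mathbf{K}=(K,\le)$ with $K=\{1,\dots,n\}\cup\{\infty\}$ (disjoint union) and $\le=\mathrm{id}_K\cup(K\times\{\infty\})$, so $1_{\mathbf{K}}=\infty$. Let $S$ be a subgroup of $(\mathrm{Aut}(\mathbf{K}),\circ)$ such that $f\vee g=k_{1_{\mathbf{K}}}$ for all $f,g\in S$ with $f\ne g$, and let $\bar S=S\cup\{k_{1_{\mathbf{K}}}\}$. Let $(R,\vee,\circ)$ be a subsemiring of $(\mathrm{JM}_1(\mathbf{L}\boxtimes\mathbf{K}),\vee,\circ)$ such that (a) every $\varphi\in R$ equals $f\boxtimes g$ for some $f\in\mathrm{JM}_1(\mathbf{L})$ and $g\in\bar S$; (b) $f_{a,b}\boxtimes g\in R$ for all $a\in L\setminus\{1_{\mathbf{L}}\}$, $b\in L$, $g\in\bar S$; (c) for every $\varphi\in R$ there exist $a\in L\setminus\{1_{\mathbf{L}}\}$, $b\in L$, $g\in\bar S$ with $f_{a,b}\boxtimes g\le\varphi$. Then $(R,\vee,\circ)$ is a finite simple additively idempotent semiring with absorbing greatest element.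
   Context: For a finite join-semilattice $\mathbf{M}$ with greatest element $1$, $\mathrm{JM}_1(\mathbf{M})$ is the set of join-preserving maps $f:M\to M$ with $f(1)=1$, a semiring under pointwise join $\vee$ and composition $\circ$, ordered pointwise; $k_a$ is the constant map with value $a$; $f_{a,b}(x)=b$ if $x\le a$ and $1$ otherwise. $\mathrm{Aut}(\mathbf{K})$ is the group of order automorphisms of $\mathbf{K}$ (bijections of $K$ fixing $\infty$). For finite join-semilattices $\mathbf{L},\mathbf{K}$, let $A=\{(x,y)\in L\times K: x=1_{\mathbf{L}}\text{ or }y=1_{\mathbf{K}}\}$, and let $L\boxtimes K$ be the quotient of $L\times K$ identifying all elements of $A$ to a single class (denoted $A$) and leaving other elements as singletons; order: every class is $\le A$, and $[a,b]\le[c,d]$ iff $a\le c$ and $b\le d$ for classes other than $A$. $\mathbf{L}\boxtimes\mathbf{K}=(L\boxtimes K,\le)$, a join-semilattice with top $A$. For $f\in\mathrm{JM}_1(\mathbf{L})$, $g\in\mathrm{JM}_1(\mathbf{K})$, $f\boxtimes g\in\mathrm{JM}_1(\mathbf{L}\boxtimes\mathbf{K})$ is given by $(f\boxtimes g)([x,y])=[f(x),g(y)]$, where $[x,y]$ is the class of $(x,y)$. A semiring is simple if its only congruences are the identity and the full relation; additively idempotent if $r+r=r$; an element is absorbing if $sr=r=rs$ for all $s$. *)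

theory Defs
  imports Main "HOL-Library.FuncSet"
begin

definition is_join :: "('a \<Rightarrow> 'a \<Rightarrow> bool) \<Rightarrow> 'a set \<Rightarrow> 'a \<Rightarrow> 'a \<Rightarrow> 'a \<Rightarrow> bool" where
  "is_join lo M x y z \<longleftrightarrow> z \<in> M \<and> lo x z \<and> lo y z \<and> (\<forall>w\<in>M. lo x w \<and> lo y w \<longrightarrow> lo z w)"

definition sjoin :: "('a \<Rightarrow> 'a \<Rightarrow> bool) \<Rightarrow> 'a set \<Rightarrow> 'a \<Rightarrow> 'a \<Rightarrow> 'a" where
  "sjoin lo M x y = (THE z. is_join lo M x y z)"

definition JM1 :: "'a set \<Rightarrow> ('a \<Rightarrow> 'a \<Rightarrow> bool) \<Rightarrow> 'a \<Rightarrow> ('a \<Rightarrow> 'a) set" where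
  "JM1 M lo t = {f. f \<in> extensional M \<and> f \<in> M \<rightarrow> M \<and>
      (\<forall>x\<in>M. \<forall>y\<in>M. f (sjoin lo M x y) = sjoin lo M (f x) (f y)) \<and> f t = t}"

definition jm_add :: "'a set \<Rightarrow> ('a \<Rightarrow> 'a \<Rightarrow> bool) \<Rightarrow> ('a \<Rightarrow> 'a) \<Rightarrow> ('a \<Rightarrow> 'a) \<Rightarrow> ('a \<Rightarrow> 'a)" where
  "jm_add M lo f g = (\<lambda>x\<in>M. sjoin lo M (f x) (g x))"

definition jm_mult :: "'a set \<Rightarrow> ('a \<Rightarrow> 'a) \<Rightarrow> ('a \<Rightarrow> 'a) \<Rightarrow> ('a \<Rightarrow> 'a)" where
  "jm_mult M f g = compose M f g"

definition jm_le :: "'a set \<Rightarrow> ('a \<Rightarrow> 'a \<Rightarrow> bool) \<Rightarrow> ('a \<Rightarrow> 'a) \<Rightarrow> ('a \<Rightarrow> 'a) \<Rightarrow> bool" where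
  "jm_le M lo f g \<longleftrightarrow> (\<forall>x\<in>M. lo (f x) (g x))"

definition kconst :: "'a set \<Rightarrow> 'a \<Rightarrow> ('a \<Rightarrow> 'a)" where
  "kconst M a = (\<lambda>x\<in>M. a)"

definition fab :: "'a::order_top \<Rightarrow> 'a \<Rightarrow> ('a \<Rightarrow> 'a)" where
  "fab a b = (\<lambda>x. if x \<le> a then b else top)"

section \<open>The semilattice K = {1,...,n} + {\<infinity>}; \<infinity> is represented by None\<close>

definition Kset :: "nat \<Rightarrow> nat option set" where
  "Kset n = Some ` {1..n} \<union> {None}"

definition leK :: "nat option \<Rightarrow> nat option \<Rightarrow> bool" where
  "leK x y \<longleftrightarrow> x = y \<or> y = None"

text \<open>Order automorphisms of K: bijections of K fixing \<infinity> (extensional on K).\<close>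
definition AutK :: "nat \<Rightarrow> (nat option \<Rightarrow> nat option) set" where
  "AutK n = {g. g \<in> extensional (Kset n) \<and> bij_betw g (Kset n) (Kset n) \<and> g None = None}"

definition subgroup_AutK :: "nat \<Rightarrow> (nat option \<Rightarrow> nat option) set \<Rightarrow> bool" where
  "subgroup_AutK n S \<longleftrightarrow> S \<subseteq> AutK n \<and> (\<lambda>x\<in>Kset n. x) \<in> S \<and>
     (\<forall>f\<in>S. \<forall>g\<in>S. compose (Kset n) f g \<in> S) \<and>
     (\<forall>f\<in>S. restrict (inv_into (Kset n) f) (Kset n) \<in> S)"

section \<open>The construction L \<boxtimes> K (as an actual quotient set)\<close>

definition Pset :: "nat \<Rightarrow> ('a \<times> nat option) set" where
  "Pset n = UNIV \<times> Kset n"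

definition Aset :: "nat \<Rightarrow> ('a::top \<times> nat option) set" where
  "Aset n = {(x, y) \<in> Pset n. x = top \<or> y = None}"

definition boxrel :: "nat \<Rightarrow> (('a::top \<times> nat option) \<times> ('a \<times> nat option)) set" where
  "boxrel n = {(p, q). p \<in> Pset n \<and> q \<in> Pset n \<and> (p = q \<or> (p \<in> Aset n \<and> q \<in> Aset n))}"

definition LK :: "nat \<Rightarrow> ('a::top \<times> nat option) set set" where
  "LK n = Pset n // boxrel n"

definition cls :: "nat \<Rightarrow> 'a::top \<Rightarrow> nat option \<Rightarrow> ('a \<times> nat option) set" where
  "cls n x y = boxrel n `` {(x, y)}"

definition leLK :: "nat \<Rightarrow> ('a::order_top \<times> nat option) set \<Rightarrow> ('a \<times> nat option) set \<Rightarrow> bool" where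
  "leLK n c d \<longleftrightarrow> c \<in> LK n \<and> d \<in> LK n \<and>
     (d = Aset n \<or> (c \<noteq> Aset n \<and> d \<noteq> Aset n \<and>
        fst (the_elem c) \<le> fst (the_elem d) \<and> leK (snd (the_elem c)) (snd (the_elem d))))"

text \<open>f \<boxtimes> g, given by [x,y] \<mapsto> [f x, g y].\<close>
definition boxmap :: "nat \<Rightarrow> ('a::top \<Rightarrow> 'a) \<Rightarrow> (nat option \<Rightarrow> nat option)
    \<Rightarrow> (('a \<times> nat option) set \<Rightarrow> ('a \<times> nat option) set)" where
  "boxmap n f g = (\<lambda>c\<in>LK n. cls n (f (fst (SOME p. p \<in> c))) (g (snd (SOME p. p \<in> c))))"

definition subsemiring :: "'b set \<Rightarrow> 'b set \<Rightarrow> ('b \<Rightarrow> 'b \<Rightarrow> 'b) \<Rightarrow> ('b \<Rightarrow> 'b \<Rightarrow> 'b) \<Rightarrow> bool" where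
  "subsemiring R T add mult \<longleftrightarrow> R \<subseteq> T \<and> R \<noteq> {} \<and>
     (\<forall>r\<in>R. \<forall>s\<in>R. add r s \<in> R \<and> mult r s \<in> R)"

definition is_semiring :: "'b set \<Rightarrow> ('b \<Rightarrow> 'b \<Rightarrow> 'b) \<Rightarrow> ('b \<Rightarrow> 'b \<Rightarrow> 'b) \<Rightarrow> bool" where
  "is_semiring R add mult \<longleftrightarrow> R \<noteq> {} \<and>
     (\<forall>r\<in>R. \<forall>s\<in>R. add r s \<in> R \<and> mult r s \<in> R) \<and>
     (\<forall>r\<in>R. \<forall>s\<in>R. \<forall>t\<in>R.
        add (add r s) t = add r (add s t) \<and> add r s = add s r \<and>
        mult (mult r s) t = mult r (mult s t) \<and>
        mult r (add s t) = add (mult r s) (mult r t) \<and>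
        mult (add r s) t = add (mult r t) (mult s t))"

definition semiring_congruence :: "'b set \<Rightarrow> ('b \<Rightarrow> 'b \<Rightarrow> 'b) \<Rightarrow> ('b \<Rightarrow> 'b \<Rightarrow> 'b) \<Rightarrow> 'b rel \<Rightarrow> bool" where
  "semiring_congruence R add mult \<rho> \<longleftrightarrow> equiv R \<rho> \<and>
     (\<forall>(a, b)\<in>\<rho>. \<forall>c\<in>R. (add a c, add b c) \<in> \<rho> \<and> (add c a, add c b) \<in> \<rho> \<and>
                        (mult a c, mult b c) \<in> \<rho> \<and> (mult c a, mult c b) \<in> \<rho>)"

definition simple_semiring :: "'b set \<Rightarrow> ('b \<Rightarrow> 'b \<Rightarrow> 'b) \<Rightarrow> ('b \<Rightarrow> 'b \<Rightarrow> 'b) \<Rightarrow> bool" where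
  "simple_semiring R add mult \<longleftrightarrow>
     (\<forall>\<rho>. semiring_congruence R add mult \<rho> \<longrightarrow> \<rho> = Id_on R \<or> \<rho> = R \<times> R)"

definition add_idempotent :: "'b set \<Rightarrow> ('b \<Rightarrow> 'b \<Rightarrow> 'b) \<Rightarrow> bool" where
  "add_idempotent R add \<longleftrightarrow> (\<forall>r\<in>R. add r r = r)"

text \<open>Absorbing greatest element (greatest w.r.t. the semiring order r \<le> s iff r + s = s).\<close>
definition has_absorbing_greatest :: "'b set \<Rightarrow> ('b \<Rightarrow> 'b \<Rightarrow> 'b) \<Rightarrow> ('b \<Rightarrow> 'b \<Rightarrow> 'b) \<Rightarrow> bool" where
  "has_absorbing_greatest R add mult \<longleftrightarrow>
     (\<exists>w\<in>R. (\<forall>r\<in>R. add r w = w) \<and> (\<forall>s\<in>R. mult s w = w \<and> mult w s = w))"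

end

theory Submission
  imports Defs
begin

text \<open>
  Everything except simplicity is a direct computation; the greatest element is
  \<open>W = f\<^sub>a\<^sub>,\<^sub>b \<boxtimes> k\<^sub>\<infinity>\<close>, the constant map onto the top class \<open>A\<close>.
  To see that \<open>R\<close> is simple, let a congruence \<open>\<rho>\<close> identify \<open>\<phi> \<noteq> \<psi>\<close> and pick a class \<open>p = [x,i]\<close>
  with \<open>\<phi> p \<le> \<psi> p\<close> failing. Then \<open>\<psi> p = [c,j]\<close> with \<open>c \<noteq> 1\<close>, and \<open>\<psi> = f' \<boxtimes> g'\<close> with \<open>g' \<in> S\<close>.
  Multiplying by \<open>f\<^sub>c\<^sub>,\<^sub>b \<boxtimes> g\<^sub>0 g'\<^sup>-\<^sup>1\<close> on the left and by \<open>f\<^sub>a\<^sub>,\<^sub>x \<boxtimes> id\<close> on the right turns \<open>\<psi>\<close>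
  into \<open>f\<^sub>a\<^sub>,\<^sub>b \<boxtimes> g\<^sub>0\<close> and \<open>\<phi>\<close> into \<open>W\<close> or into \<open>f\<^sub>a\<^sub>,\<^sub>b \<boxtimes> g\<^sub>1\<close> with \<open>g\<^sub>0 \<noteq> g\<^sub>1 \<in> S\<close>. As distinct
  elements of \<open>S\<close> join to \<open>k\<^sub>\<infinity>\<close>, in either case \<open>f\<^sub>a\<^sub>,\<^sub>b \<boxtimes> g\<^sub>0\<close> is \<open>\<rho>\<close>-related to \<open>W\<close>. By (c)
  every \<open>\<chi> \<in> R\<close> lies above such an element, so \<open>\<chi> = \<chi> + f\<^sub>a\<^sub>,\<^sub>b \<boxtimes> g\<^sub>0\<close> is related to
  \<open>\<chi> + W = W\<close>.
\<close>

lemma compose_cancel_left: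
  assumes "inj_on k B" "g \<in> A \<rightarrow> B" "h \<in> A \<rightarrow> B" "g \<in> extensional A" "h \<in> extensional A"
    and "compose A k g = compose A k h"
  shows "g = h"
proof (rule extensionalityI[OF assms(4,5)])
  fix x assume "x \<in> A"
  then have "k (g x) = k (h x)" "g x \<in> B" "h x \<in> B"
    using assms(2,3) fun_cong[OF assms(6), of x] by (auto simp: compose_eq)
  then show "g x = h x" using assms(1) by (simp add: inj_on_eq_iff)
qed

locale join_semilattice_on =
  fixes M :: "'b set" and lo :: "'b \<Rightarrow> 'b \<Rightarrow> bool"
  assumes refl: "x \<in> M \<Longrightarrow> lo x x"
    and antisym: "x \<in> M \<Longrightarrow> y \<in> M \<Longrightarrow> lo x y \<Longrightarrow> lo y x \<Longrightarrow> x = y"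
    and trans: "x \<in> M \<Longrightarrow> y \<in> M \<Longrightarrow> z \<in> M \<Longrightarrow> lo x y \<Longrightarrow> lo y z \<Longrightarrow> lo x z"
    and join_exists: "x \<in> M \<Longrightarrow> y \<in> M \<Longrightarrow> \<exists>z. is_join lo M x y z"
begin

lemma sjoin_eqI: "is_join lo M x y z \<Longrightarrow> sjoin lo M x y = z"
  unfolding sjoin_def by (rule the_equality) (auto simp: is_join_def intro: antisym)

lemma is_join_sjoin: "x \<in> M \<Longrightarrow> y \<in> M \<Longrightarrow> is_join lo M x y (sjoin lo M x y)"
  using join_exists sjoin_eqI by metis

lemma sjoin_closed: "x \<in> M \<Longrightarrow> y \<in> M \<Longrightarrow> sjoin lo M x y \<in> M"
  and sjoin_upper1: "x \<in> M \<Longrightarrow> y \<in> M \<Longrightarrow> lo x (sjoin lo M x y)"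
  and sjoin_upper2: "x \<in> M \<Longrightarrow> y \<in> M \<Longrightarrow> lo y (sjoin lo M x y)"
  and sjoin_least: "x \<in> M \<Longrightarrow> y \<in> M \<Longrightarrow> w \<in> M \<Longrightarrow> lo x w \<Longrightarrow> lo y w \<Longrightarrow> lo (sjoin lo M x y) w"
  using is_join_sjoin unfolding is_join_def by blast+

lemma sjoin_commute: "x \<in> M \<Longrightarrow> y \<in> M \<Longrightarrow> sjoin lo M x y = sjoin lo M y x"
  by (rule sjoin_eqI) (auto simp: is_join_def sjoin_closed sjoin_upper1 sjoin_upper2 sjoin_least)

lemma sjoin_absorb1: "x \<in> M \<Longrightarrow> y \<in> M \<Longrightarrow> lo y x \<Longrightarrow> sjoin lo M x y = x"
  by (rule sjoin_eqI) (auto simp: is_join_def refl)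

lemma sjoin_absorb2: "x \<in> M \<Longrightarrow> y \<in> M \<Longrightarrow> lo x y \<Longrightarrow> sjoin lo M x y = y"
  using sjoin_absorb1 sjoin_commute by metis

lemma sjoin_idem: "x \<in> M \<Longrightarrow> sjoin lo M x x = x"
  by (simp add: sjoin_absorb1 refl)

lemma sjoin_assoc_le:
  assumes "x \<in> M" "y \<in> M" "z \<in> M"
  shows "lo (sjoin lo M (sjoin lo M x y) z) (sjoin lo M x (sjoin lo M y z))"
proof -
  let ?r = "sjoin lo M x (sjoin lo M y z)"
  have "lo x ?r" "lo y ?r" "lo z ?r"
    using assms sjoin_upper1 sjoin_upper2 sjoin_closed trans by metis+
  then show ?thesis using assms by (simp add: sjoin_least sjoin_closed)
qed

lemma sjoin_assoc:
  assumes "x \<in> M" "y \<in> M" "z \<in> M"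
  shows "sjoin lo M (sjoin lo M x y) z = sjoin lo M x (sjoin lo M y z)"
proof (rule antisym)
  have "sjoin lo M x (sjoin lo M y z) = sjoin lo M (sjoin lo M z y) x"
    and "sjoin lo M (sjoin lo M x y) z = sjoin lo M z (sjoin lo M y x)"
    using assms by (simp_all add: sjoin_commute sjoin_closed)
  then show "lo (sjoin lo M x (sjoin lo M y z)) (sjoin lo M (sjoin lo M x y) z)"
    using sjoin_assoc_le[of z y x] assms by simp
qed (use assms sjoin_assoc_le in \<open>simp_all add: sjoin_closed\<close>)

end

lemma join_semilattice_on_Kset: "join_semilattice_on (Kset n) leK"
proof
  fix x y assume "x \<in> Kset n" "y \<in> Kset n"
  then show "\<exists>z. is_join leK (Kset n) x y z"
    by (intro exI[of _ "if x = y then x else None"]) (auto simp: leK_def is_join_def Kset_def)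
qed (auto simp: leK_def)

section \<open>The semilattice \<open>L \<boxtimes> K\<close>\<close>

lemma Kset_None [simp]: "None \<in> Kset n"
  and Kset_Some [simp]: "Some i \<in> Kset n \<longleftrightarrow> i \<in> {1..n}"
  by (auto simp: Kset_def)

lemma cls_eq: "y \<in> Kset n \<Longrightarrow> cls n x y = (if x = top \<or> y = None then Aset n else {(x, y)})"
  unfolding cls_def boxrel_def by (auto simp: Aset_def Pset_def)

lemma cls_in_LK: "y \<in> Kset n \<Longrightarrow> cls n x y \<in> LK n"
  unfolding LK_def cls_def by (auto simp: Pset_def intro!: quotientI)

lemma Aset_in_LK: "Aset n \<in> LK n"
  using cls_in_LK[of None n top] by (simp add: cls_eq)

lemma singleton_in_LK: "x \<noteq> top \<Longrightarrow> i \<in> {1..n} \<Longrightarrow> {(x, Some i)} \<in> LK n"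
  using cls_in_LK[of "Some i" n x] by (simp add: cls_eq)

lemma singleton_neq_Aset: "{(x, Some i)} \<noteq> Aset n"
proof -
  have "(top, None) \<in> Aset n" by (simp add: Aset_def Pset_def)
  then show ?thesis by auto
qed

lemma LK_cases [consumes 1, case_names Aset singleton]:
  assumes "c \<in> LK n"
  obtains "c = Aset n"
  | x i where "x \<noteq> top" "i \<in> {1..n}" "c = {(x, Some i)}"
proof -
  obtain x y where "y \<in> Kset n" "c = cls n x y"
    using assms unfolding LK_def cls_def quotient_def Pset_def by auto
  then show ?thesis using that by (cases y) (auto simp: cls_eq split: if_splits)
qed

lemma finite_LK: "finite (LK n :: ('a::{finite, top} \<times> nat option) set set)"
proof -
  have "finite (Pset n :: ('a \<times> nat option) set)" by (simp add: Pset_def Kset_def)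
  moreover have "LK n \<subseteq> Pow (Pset n :: ('a \<times> nat option) set)"
    unfolding LK_def quotient_def boxrel_def by auto
  ultimately show ?thesis by (meson finite_Pow_iff rev_finite_subset)
qed

lemma leLK_Aset: "c \<in> LK n \<Longrightarrow> leLK n c (Aset n)"
  by (simp add: leLK_def Aset_in_LK)

lemma not_leLK_Aset_singleton: "\<not> leLK n (Aset n) {(x, Some i)}"
  by (simp add: leLK_def singleton_neq_Aset)

lemma leLK_singleton_iff:
  "x \<noteq> top \<Longrightarrow> x' \<noteq> top \<Longrightarrow> i \<in> {1..n} \<Longrightarrow> i' \<in> {1..n} \<Longrightarrow>
    leLK n {(x, Some i)} {(x', Some i')} \<longleftrightarrow> x \<le> x' \<and> i = i'"
  by (simp add: leLK_def leK_def singleton_neq_Aset singleton_in_LK)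

lemma join_semilattice_on_LK:
  "join_semilattice_on (LK n) (leLK n :: ('a::{semilattice_sup, order_top} \<times> nat option) set \<Rightarrow> _)"
proof
  fix c :: "('a \<times> nat option) set" assume "c \<in> LK n"
  then show "leLK n c c"
    by (cases rule: LK_cases) (auto simp: leLK_Aset leLK_singleton_iff Aset_in_LK)
next
  fix c d :: "('a \<times> nat option) set" assume "c \<in> LK n" "d \<in> LK n" "leLK n c d" "leLK n d c"
  then show "c = d"
    by (elim LK_cases) (auto simp: not_leLK_Aset_singleton leLK_singleton_iff)
next
  fix c d e :: "('a \<times> nat option) set"
  assume "c \<in> LK n" "d \<in> LK n" "e \<in> LK n" "leLK n c d" "leLK n d e"
  then show "leLK n c e"
    by (elim LK_cases)
      (auto simp: leLK_Aset not_leLK_Aset_singleton leLK_singleton_iff Aset_in_LK singleton_in_LK)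
next
  fix c d :: "('a \<times> nat option) set" assume c: "c \<in> LK n" and d: "d \<in> LK n"
  show "\<exists>z. is_join (leLK n) (LK n) c d z"
  proof (cases "c = Aset n \<or> d = Aset n")
    case True
    then show ?thesis using c d
      by (intro exI[of _ "Aset n"]) (auto simp: is_join_def Aset_in_LK leLK_Aset)
  next
    case False
    then obtain x i x' i' where xi: "x \<noteq> top" "i \<in> {1..n}" "c = {(x, Some i)}"
      and xi': "x' \<noteq> top" "i' \<in> {1..n}" "d = {(x', Some i')}"
      using c d by (metis LK_cases)
    have upper_bound: "\<exists>y. y \<noteq> top \<and> sup x x' \<le> y \<and> i = i' \<and> w = {(y, Some i)}"
      if "w \<in> LK n" "w \<noteq> Aset n" "leLK n c w" "leLK n d w" for w
      using that(1)
    proof (cases rule: LK_cases)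
      case (singleton y j)
      then show ?thesis using that xi xi' by (auto simp: leLK_singleton_iff)
    qed (use that in simp)
    show ?thesis
    proof (cases "i = i' \<and> sup x x' \<noteq> top")
      case True
      have "leLK n {(sup x x', Some i)} w" if "w \<in> LK n" "leLK n c w" "leLK n d w" for w
        using upper_bound[OF that(1) _ that(2,3)] True xi(2)
        by (cases "w = Aset n") (auto simp: leLK_Aset leLK_singleton_iff singleton_in_LK)
      then show ?thesis using True xi xi'
        by (intro exI[of _ "{(sup x x', Some i)}"]) (auto simp: is_join_def singleton_in_LK leLK_singleton_iff)
    next
      case False
      have "leLK n (Aset n) w" if w: "w \<in> LK n" "leLK n c w" "leLK n d w" for w
      proof -
        have "w = Aset n"
        proof (rule ccontr)
          assume "w \<noteq> Aset n"
          then obtain y where "y \<noteq> top" "sup x x' \<le> y" "i = i'"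
            using upper_bound[OF w(1) _ w(2,3)] by blast
          with False show False by (simp add: top_unique)
        qed
        then show ?thesis by (simp add: leLK_Aset Aset_in_LK)
      qed
      then show ?thesis using c d
        by (intro exI[of _ "Aset n"]) (auto simp: is_join_def Aset_in_LK leLK_Aset)
    qed
  qed
qed

interpretation LK: join_semilattice_on "LK n" "leLK n :: ('a::{semilattice_sup, order_top} \<times> nat option) set \<Rightarrow> _"
  by (rule join_semilattice_on_LK)

lemma sjoin_LK_Aset:
  "c \<in> LK n \<Longrightarrow> sjoin (leLK n) (LK n) c (Aset n) = (Aset n :: ('a::{semilattice_sup, order_top} \<times> nat option) set)"
  by (simp add: LK.sjoin_absorb2 leLK_Aset Aset_in_LK)

lemma sjoin_LK_singletons_distinct:
  fixes x x' :: "'a::{semilattice_sup, order_top}"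
  assumes "x \<noteq> top" "x' \<noteq> top" "i \<in> {1..n}" "i' \<in> {1..n}" "i \<noteq> i'"
  shows "sjoin (leLK n) (LK n) {(x, Some i)} {(x', Some i')} = Aset n"
proof -
  let ?z = "sjoin (leLK n) (LK n) {(x, Some i)} {(x', Some i')}"
  have "{(x, Some i)} \<in> LK n" "{(x', Some i')} \<in> LK n" using assms by (simp_all add: singleton_in_LK)
  then have "?z \<in> LK n" "leLK n {(x, Some i)} ?z" "leLK n {(x', Some i')} ?z"
    by (simp_all add: LK.sjoin_closed LK.sjoin_upper1 LK.sjoin_upper2)
  then show ?thesis using assms by (cases rule: LK_cases) (auto simp: leLK_singleton_iff)
qed

section \<open>Maps of the form \<open>f \<boxtimes> g\<close>\<close>

definition Kendo :: "nat \<Rightarrow> (nat option \<Rightarrow> nat option) \<Rightarrow> bool" where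
  "Kendo n g \<longleftrightarrow> g \<in> Kset n \<rightarrow> Kset n \<and> g None = None"

lemma Kendo_compose: "Kendo n g \<Longrightarrow> Kendo n h \<Longrightarrow> Kendo n (compose (Kset n) g h)"
  unfolding Kendo_def compose_def by auto

lemma Kendo_kconst_None: "Kendo n (kconst (Kset n) None)"
  by (simp add: Kendo_def kconst_def)

lemma Kendo_Some: "Kendo n g \<Longrightarrow> i \<in> {1..n} \<Longrightarrow> g (Some i) \<in> Kset n"
  unfolding Kendo_def by (metis Kset_Some PiE)

lemma boxmap_Aset:
  fixes f :: "'a::top \<Rightarrow> 'a"
  assumes "f top = top" "Kendo n g"
  shows "boxmap n f g (Aset n) = Aset n"
proof -
  define p where "p = (SOME p. p \<in> (Aset n :: ('a \<times> nat option) set))"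
  have "(top, None) \<in> Aset n" by (simp add: Aset_def Pset_def)
  then have "p \<in> Aset n" unfolding p_def by (rule someI)
  then have "snd p \<in> Kset n" "fst p = top \<or> snd p = None"
    by (auto simp: Aset_def Pset_def)
  moreover from this(1) have "g (snd p) \<in> Kset n" using assms(2) by (auto simp: Kendo_def)
  ultimately have "cls n (f (fst p)) (g (snd p)) = Aset n"
    using assms by (auto simp: cls_eq Kendo_def)
  then show ?thesis by (simp add: boxmap_def Aset_in_LK p_def)
qed

lemma boxmap_singleton:
  "x \<noteq> top \<Longrightarrow> i \<in> {1..n} \<Longrightarrow> boxmap n f g {(x, Some i)} = cls n (f x) (g (Some i))"
  by (simp add: boxmap_def singleton_in_LK)

lemma boxmap_const_top:
  assumes "Kendo n g"
  shows "boxmap n (\<lambda>_. top) g = (kconst (LK n) (Aset n) :: ('a::top \<times> nat option) set \<Rightarrow> _)"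
proof (rule extensionalityI[of _ "LK n"])
  fix c :: "('a \<times> nat option) set" assume "c \<in> LK n"
  then show "boxmap n (\<lambda>_. top) g c = kconst (LK n) (Aset n) c"
    using assms by (cases rule: LK_cases) (simp_all add: boxmap_Aset boxmap_singleton kconst_def
        Aset_in_LK singleton_in_LK cls_eq Kendo_Some)
qed (simp_all add: boxmap_def kconst_def)

lemma boxmap_kconst_None:
  fixes f :: "'a::top \<Rightarrow> 'a"
  assumes "f top = top"
  shows "boxmap n f (kconst (Kset n) None) = kconst (LK n) (Aset n)"
proof (rule extensionalityI[of _ "LK n"])
  fix c :: "('a \<times> nat option) set" assume "c \<in> LK n"
  then show "boxmap n f (kconst (Kset n) None) c = kconst (LK n) (Aset n) c"
    using assms by (cases rule: LK_cases) (simp_all add: boxmap_Aset boxmap_singleton kconst_def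
        Aset_in_LK singleton_in_LK cls_eq Kendo_kconst_None[unfolded kconst_def])
qed (simp_all add: boxmap_def kconst_def)

lemma boxmap_mult:
  fixes f1 f2 :: "'a::top \<Rightarrow> 'a"
  assumes f: "f1 top = top" "f2 top = top" and g: "Kendo n g1" "Kendo n g2"
  shows "jm_mult (LK n) (boxmap n f1 g1) (boxmap n f2 g2) = boxmap n (f1 \<circ> f2) (compose (Kset n) g1 g2)"
proof (rule extensionalityI[of _ "LK n"])
  fix c :: "('a \<times> nat option) set" assume "c \<in> LK n"
  then show "jm_mult (LK n) (boxmap n f1 g1) (boxmap n f2 g2) c
      = boxmap n (f1 \<circ> f2) (compose (Kset n) g1 g2) c"
  proof (cases rule: LK_cases)
    case Aset
    with f g show ?thesis by (simp add: jm_mult_def compose_eq boxmap_Aset Aset_in_LK Kendo_compose)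
  next
    case (singleton x i)
    then have g2i: "g2 (Some i) \<in> Kset n" using g by (simp add: Kendo_Some)
    moreover have "g1 (g2 (Some i)) \<in> Kset n" "g1 None = None"
      using g g2i by (auto simp: Kendo_def)
    ultimately show ?thesis using singleton f g
      by (cases "g2 (Some i)")
        (auto simp: jm_mult_def compose_eq boxmap_singleton singleton_in_LK cls_eq boxmap_Aset)
  qed
qed (simp_all add: jm_mult_def compose_def boxmap_def)

lemma fab_top: "a \<noteq> top \<Longrightarrow> fab a b top = top"
  by (simp add: fab_def top_unique)

lemma fab_sandwich:
  fixes f :: "'a::order_top \<Rightarrow> 'a"
  assumes "c \<noteq> top" "f top = top"
  shows "fab c b \<circ> f \<circ> fab a x = (if f x \<le> c then fab a b else (\<lambda>_. top))"
  using assms by (auto simp: fab_def top_unique)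

text \<open>Multiplying \<open>f \<boxtimes> g\<close> by \<open>f\<^sub>c\<^sub>,\<^sub>b \<boxtimes> k\<close> on the left and \<open>f\<^sub>a\<^sub>,\<^sub>x \<boxtimes> id\<close> on the right
  isolates the single value \<open>f x\<close>.\<close>

lemma boxmap_sandwich:
  fixes f :: "'a::order_top \<Rightarrow> 'a"
  assumes "c \<noteq> top" "a \<noteq> top" "f top = top" "Kendo n k" "Kendo n g"
  shows "jm_mult (LK n) (jm_mult (LK n) (boxmap n (fab c b) k) (boxmap n f g))
           (boxmap n (fab a x) (\<lambda>y\<in>Kset n. y))
         = (if f x \<le> c then boxmap n (fab a b) (compose (Kset n) k g) else kconst (LK n) (Aset n))"
proof -
  have "Kendo n (\<lambda>y\<in>Kset n. y)" by (simp add: Kendo_def)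
  moreover have "compose (Kset n) (compose (Kset n) k g) (\<lambda>y\<in>Kset n. y) = compose (Kset n) k g"
    by (rule extensionalityI[of _ "Kset n"]) (auto simp: compose_def)
  ultimately show ?thesis
    using assms fab_sandwich[of c f b a x]
    by (simp add: boxmap_mult fab_top Kendo_compose boxmap_const_top)
qed

context
  fixes R :: "'b set" and add mul :: "'b \<Rightarrow> 'b \<Rightarrow> 'b" and \<rho> :: "'b rel"
  assumes congruence: "semiring_congruence R add mul \<rho>"
begin

lemma congruence_in_carrier: "(u, v) \<in> \<rho> \<Longrightarrow> u \<in> R \<and> v \<in> R"
  using congruence unfolding semiring_congruence_def equiv_def refl_on_def by blast

lemma congruence_refl: "u \<in> R \<Longrightarrow> (u, u) \<in> \<rho>"
  using congruence unfolding semiring_congruence_def equiv_def refl_on_def by blast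

lemma congruence_sym: "(u, v) \<in> \<rho> \<Longrightarrow> (v, u) \<in> \<rho>"
  using congruence unfolding semiring_congruence_def equiv_def by (meson symD)

lemma congruence_trans: "(u, v) \<in> \<rho> \<Longrightarrow> (v, w) \<in> \<rho> \<Longrightarrow> (u, w) \<in> \<rho>"
  using congruence unfolding semiring_congruence_def equiv_def by (meson transD)

lemma congruence_add_left: "(u, v) \<in> \<rho> \<Longrightarrow> w \<in> R \<Longrightarrow> (add w u, add w v) \<in> \<rho>"
  and congruence_mult_left: "(u, v) \<in> \<rho> \<Longrightarrow> w \<in> R \<Longrightarrow> (mul w u, mul w v) \<in> \<rho>"
  and congruence_mult_right: "(u, v) \<in> \<rho> \<Longrightarrow> w \<in> R \<Longrightarrow> (mul u w, mul v w) \<in> \<rho>"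
  using congruence unfolding semiring_congruence_def by blast+

lemma congruence_not_Id_on:
  assumes "\<rho> \<noteq> Id_on R"
  obtains u v where "(u, v) \<in> \<rho>" "u \<noteq> v"
proof -
  have "Id_on R \<subseteq> \<rho>" using congruence_refl by auto
  moreover have "\<rho> \<subseteq> Id_on R" if "\<And>u v. (u, v) \<in> \<rho> \<Longrightarrow> u = v"
    using that congruence_in_carrier by auto
  ultimately show ?thesis using assms that by blast
qed

lemma congruence_total_if_below_related:
  assumes "\<And>r. r \<in> R \<Longrightarrow> add r w = w"
    and "\<And>r. r \<in> R \<Longrightarrow> \<exists>e. add r e = r \<and> (e, w) \<in> \<rho>"
  shows "\<rho> = R \<times> R"
proof -
  have related: "(r, w) \<in> \<rho>" if "r \<in> R" for r
  proof -
    obtain e where "add r e = r" "(e, w) \<in> \<rho>" using assms(2) \<open>r \<in> R\<close> by blast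
    then show ?thesis using congruence_add_left[of e w r] assms(1) \<open>r \<in> R\<close> by simp
  qed
  have "(r, s) \<in> \<rho>" if "r \<in> R" "s \<in> R" for r s
    using related[OF that(1)] congruence_sym[OF related[OF that(2)]] by (rule congruence_trans)
  then show ?thesis using congruence_in_carrier by auto
qed

end

section \<open>The semiring \<open>R\<close>\<close>

locale box_semiring =
  fixes n :: nat
    and S :: "(nat option \<Rightarrow> nat option) set"
    and R :: "(('a::{finite, semilattice_sup, order_top} \<times> nat option) set
                \<Rightarrow> ('a \<times> nat option) set) set"
  assumes S_sub: "subgroup_AutK n S"
    and S_join: "\<And>f g. f \<in> S \<Longrightarrow> g \<in> S \<Longrightarrow> f \<noteq> g \<Longrightarrow>
                   jm_add (Kset n) leK f g = kconst (Kset n) None"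
    and R_sub: "subsemiring R (JM1 (LK n) (leLK n) (Aset n)) (jm_add (LK n) (leLK n)) (jm_mult (LK n))"
    and R_boxmap_form: "\<And>\<phi>. \<phi> \<in> R \<Longrightarrow> \<exists>f \<in> JM1 (UNIV :: 'a set) (\<le>) top.
              \<exists>g \<in> S \<union> {kconst (Kset n) None}. \<phi> = boxmap n f g"
    and fab_boxmap_in_R: "\<And>a b g. a \<noteq> top \<Longrightarrow> g \<in> S \<union> {kconst (Kset n) None} \<Longrightarrow>
              boxmap n (fab a b) g \<in> R"
    and R_above_fab_boxmap: "\<And>\<phi>. \<phi> \<in> R \<Longrightarrow> \<exists>a b g. a \<noteq> top \<and> g \<in> S \<union> {kconst (Kset n) None} \<and>
              jm_le (LK n) (leLK n) (boxmap n (fab a b) g) \<phi>"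
begin

abbreviation "K \<equiv> Kset n"
abbreviation "radd \<equiv> jm_add (LK n) (leLK n :: ('a \<times> nat option) set \<Rightarrow> _)"
abbreviation "rmult \<equiv> jm_mult (LK n :: ('a \<times> nat option) set set)"
abbreviation "W \<equiv> kconst (LK n) (Aset n :: ('a \<times> nat option) set)"

lemma S_subset_AutK: "S \<subseteq> AutK n"
  and id_in_S: "(\<lambda>x\<in>K. x) \<in> S"
  and compose_in_S: "f \<in> S \<Longrightarrow> g \<in> S \<Longrightarrow> compose K f g \<in> S"
  and inverse_in_S: "f \<in> S \<Longrightarrow> restrict (inv_into K f) K \<in> S"
  using S_sub by (auto simp: subgroup_AutK_def)

lemma S_bij_betw: "g \<in> S \<Longrightarrow> bij_betw g K K"
  and S_extensional: "g \<in> S \<Longrightarrow> g \<in> extensional K"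
  using S_subset_AutK by (auto simp: AutK_def)

lemma Kendo_S: "g \<in> S \<Longrightarrow> Kendo n g"
  using S_subset_AutK by (auto simp: AutK_def Kendo_def dest: bij_betw_imp_funcset)

lemma S_Some:
  assumes "g \<in> S" "i \<in> {1..n}"
  obtains m where "m \<in> {1..n}" "g (Some i) = Some m"
proof -
  have "g (Some i) \<in> K" using Kendo_S[OF assms(1)] assms(2) by (rule Kendo_Some)
  moreover have "g (Some i) \<noteq> g None"
    using S_bij_betw[OF assms(1)] assms(2) by (auto simp: bij_betw_def inj_on_eq_iff)
  ultimately show ?thesis using that Kendo_S[OF assms(1)] by (cases "g (Some i)") (auto simp: Kendo_def)
qed

lemma S_distinct_Some:
  assumes "g \<in> S" "g' \<in> S" "g \<noteq> g'" "i \<in> {1..n}"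
  shows "g (Some i) \<noteq> g' (Some i)"
proof
  assume eq: "g (Some i) = g' (Some i)"
  obtain m where m: "m \<in> {1..n}" "g (Some i) = Some m" using S_Some assms(1,4) .
  have "sjoin leK K (g (Some i)) (g' (Some i)) = None"
    using fun_cong[OF S_join[OF assms(1-3)], of "Some i"] assms(4)
    by (simp add: jm_add_def kconst_def)
  moreover have "sjoin leK K (Some m) (Some m) = Some m"
    using join_semilattice_on.sjoin_idem[OF join_semilattice_on_Kset] m(1) by simp
  ultimately show False using eq m(2) by simp
qed

lemma compose_inverse_cancel:
  assumes "g \<in> S" "h \<in> S"
  shows "compose K (compose K h (restrict (inv_into K g) K)) g = h"
proof -
  have "compose K (compose K h (restrict (inv_into K g) K)) g
      = compose K h (compose K (restrict (inv_into K g) K) g)"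
    using S_bij_betw[OF assms(1)] by (simp add: compose_assoc[symmetric] bij_betw_imp_funcset)
  also have "\<dots> = h"
    using S_bij_betw[OF assms(1)] bij_betw_imp_funcset[OF S_bij_betw[OF assms(2)]]
      S_extensional[OF assms(2)]
    by (simp add: compose_inv_into_id compose_Id)
  finally show ?thesis .
qed

lemma S_compose_cancel_left:
  assumes "k \<in> S" "g \<in> S" "h \<in> S" "compose K k g = compose K k h"
  shows "g = h"
proof (rule compose_cancel_left[of k K])
  show "inj_on k K" using S_bij_betw[OF assms(1)] by (simp add: bij_betw_def)
qed (use assms Kendo_S S_extensional in \<open>auto simp: Kendo_def\<close>)

lemma R_in_JM1: "r \<in> R \<Longrightarrow> r \<in> JM1 (LK n) (leLK n) (Aset n)"
  and radd_closed: "r \<in> R \<Longrightarrow> s \<in> R \<Longrightarrow> radd r s \<in> R"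
  and rmult_closed: "r \<in> R \<Longrightarrow> s \<in> R \<Longrightarrow> rmult r s \<in> R"
  and R_nonempty: "R \<noteq> {}"
  using R_sub by (auto simp: subsemiring_def)

lemma R_extensional: "r \<in> R \<Longrightarrow> r \<in> extensional (LK n)"
  and R_funcset: "r \<in> R \<Longrightarrow> c \<in> LK n \<Longrightarrow> r c \<in> LK n"
  and R_Aset: "r \<in> R \<Longrightarrow> r (Aset n) = Aset n"
  and R_sjoin: "r \<in> R \<Longrightarrow> c \<in> LK n \<Longrightarrow> d \<in> LK n \<Longrightarrow>
     r (sjoin (leLK n) (LK n) c d) = sjoin (leLK n) (LK n) (r c) (r d)"
  using R_in_JM1 unfolding JM1_def by blast+

lemma R_boxmap:
  assumes "\<phi> \<in> R"
  obtains f g where "\<phi> = boxmap n f g" "f top = top" "g \<in> S \<union> {kconst K None}"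
  using R_boxmap_form[OF assms] that by (auto simp: JM1_def)

lemma W_in_R: "W \<in> R"
proof -
  obtain \<phi> where "\<phi> \<in> R" using R_nonempty by blast
  then obtain x :: 'a where "x \<noteq> top" using R_above_fab_boxmap by blast
  then have "boxmap n (fab x x) (kconst K None) \<in> R" by (intro fab_boxmap_in_R) simp_all
  then show ?thesis using \<open>x \<noteq> top\<close> by (simp add: boxmap_kconst_None fab_top)
qed

lemma radd_W: "r \<in> R \<Longrightarrow> radd r W = W"
  by (rule extensionalityI[of _ "LK n"]) (auto simp: jm_add_def kconst_def sjoin_LK_Aset R_funcset)

lemma rmult_W: "r \<in> R \<Longrightarrow> rmult r W = W"
  and W_rmult: "r \<in> R \<Longrightarrow> rmult W r = W"
  by (rule extensionalityI[of _ "LK n"];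
      auto simp: jm_mult_def compose_def kconst_def R_Aset R_funcset)+

lemma radd_idem: "r \<in> R \<Longrightarrow> radd r r = r"
  by (rule extensionalityI[OF _ R_extensional]) (auto simp: jm_add_def LK.sjoin_idem R_funcset)

lemma radd_absorb: "r \<in> R \<Longrightarrow> e \<in> R \<Longrightarrow> jm_le (LK n) (leLK n) e r \<Longrightarrow> radd r e = r"
  by (rule extensionalityI[OF _ R_extensional])
    (auto simp: jm_add_def jm_le_def LK.sjoin_absorb1 R_funcset)

lemma radd_fab_box_distinct:
  assumes "a \<noteq> top" "g0 \<in> S" "g1 \<in> S" "g0 \<noteq> g1"
  shows "radd (boxmap n (fab a b) g0) (boxmap n (fab a b) g1) = W"
proof (rule extensionalityI[of _ "LK n"])
  fix c :: "('a \<times> nat option) set" assume "c \<in> LK n"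
  then show "radd (boxmap n (fab a b) g0) (boxmap n (fab a b) g1) c = W c"
  proof (cases rule: LK_cases)
    case Aset
    then show ?thesis using assms
      by (simp add: jm_add_def kconst_def boxmap_Aset fab_top Kendo_S sjoin_LK_Aset Aset_in_LK)
  next
    case (singleton y l)
    obtain m0 where m0: "m0 \<in> {1..n}" "g0 (Some l) = Some m0" using S_Some assms(2) singleton(2) .
    obtain m1 where m1: "m1 \<in> {1..n}" "g1 (Some l) = Some m1" using S_Some assms(3) singleton(2) .
    have "m0 \<noteq> m1" using S_distinct_Some[OF assms(2-4) singleton(2)] m0 m1 by simp
    then show ?thesis using singleton m0 m1
      by (auto simp: jm_add_def kconst_def boxmap_singleton cls_eq singleton_in_LK Aset_in_LK
          sjoin_LK_Aset sjoin_LK_singletons_distinct)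
  qed
qed (simp_all add: jm_add_def kconst_def)

lemma R_value_not_Aset:
  assumes "\<psi> \<in> R" "x \<noteq> top" "i \<in> {1..n}" "\<psi> {(x, Some i)} \<noteq> Aset n"
  obtains f g j where "\<psi> = boxmap n f g" "f top = top" "g \<in> S" "j \<in> {1..n}"
    "g (Some i) = Some j" "f x \<noteq> top" "\<psi> {(x, Some i)} = {(f x, Some j)}"
proof -
  obtain f g where \<psi>: "\<psi> = boxmap n f g" "f top = top" "g \<in> S \<union> {kconst K None}"
    using R_boxmap assms(1) .
  have \<psi>_value: "\<psi> {(x, Some i)} = cls n (f x) (g (Some i))"
    using \<psi>(1) assms(2,3) by (simp add: boxmap_singleton)
  have "g \<in> S"
  proof (rule ccontr)
    assume "g \<notin> S"
    then have "\<psi> {(x, Some i)} = Aset n" using \<psi>(3) \<psi>_value assms(3) by (simp add: kconst_def cls_eq)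
    with assms(4) show False by contradiction
  qed
  moreover obtain j where "j \<in> {1..n}" "g (Some i) = Some j" using S_Some \<open>g \<in> S\<close> assms(3) .
  moreover have "f x \<noteq> top"
  proof
    assume "f x = top"
    then have "\<psi> {(x, Some i)} = Aset n"
      using \<psi>_value \<open>j \<in> {1..n}\<close> \<open>g (Some i) = Some j\<close> by (simp add: cls_eq)
    with assms(4) show False by contradiction
  qed
  ultimately show ?thesis using that \<psi> \<psi>_value by (simp add: cls_eq)
qed

lemma fab_box_related_W_if_related_distinct:
  assumes cong: "semiring_congruence R radd rmult \<rho>"
    and rel: "(boxmap n (fab a b) g0, boxmap n (fab a b) g1) \<in> \<rho>"
    and "a \<noteq> top" "g0 \<in> S" "g1 \<in> S" "g0 \<noteq> g1"
  shows "(boxmap n (fab a b) g0, W) \<in> \<rho>"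
proof -
  have "boxmap n (fab a b) g0 \<in> R" using assms(3,4) by (intro fab_boxmap_in_R) simp_all
  moreover note congruence_add_left[OF cong rel this]
  ultimately show ?thesis using assms(3-6) by (simp add: radd_idem radd_fab_box_distinct)
qed

lemma sandwich_cases:
  assumes \<phi>: "\<phi> \<in> R" and x: "x \<noteq> top" "i \<in> {1..n}" and "c \<noteq> top" "a \<noteq> top"
    and k: "k \<in> S" and g': "g' \<in> S" "j \<in> {1..n}" "g' (Some i) = Some j"
    and not_le: "\<not> leLK n (\<phi> {(x, Some i)}) {(c, Some j)}"
  shows "rmult (rmult (boxmap n (fab c b) k) \<phi>) (boxmap n (fab a x) (\<lambda>y\<in>K. y)) = W \<or>
    (\<exists>g\<in>S. g \<noteq> g' \<and>
       rmult (rmult (boxmap n (fab c b) k) \<phi>) (boxmap n (fab a x) (\<lambda>y\<in>K. y))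
       = boxmap n (fab a b) (compose K k g))"
    (is "?sandwich = W \<or> _")
proof -
  obtain f g where \<phi>_eq: "\<phi> = boxmap n f g" "f top = top" "g \<in> S \<union> {kconst K None}"
    using R_boxmap \<phi> .
  show ?thesis
  proof (cases "g \<in> S \<and> f x \<le> c")
    case True
    have "g \<noteq> g'"
    proof
      assume "g = g'"
      have "f x \<noteq> top" using True \<open>c \<noteq> top\<close> by (auto simp: top_unique)
      moreover from this have "\<phi> {(x, Some i)} = {(f x, Some j)}"
        using \<phi>_eq(1) g' \<open>g = g'\<close> x by (simp add: boxmap_singleton cls_eq)
      ultimately show False using not_le True \<open>c \<noteq> top\<close> g'(2) by (simp add: leLK_singleton_iff)
    qed
    moreover have "?sandwich = boxmap n (fab a b) (compose K k g)"
      using True \<phi>_eq assms(4,5) k by (simp add: boxmap_sandwich Kendo_S)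
    ultimately show ?thesis using True by blast
  next
    case False
    have "?sandwich = W"
    proof (cases "g \<in> S")
      case True
      with False show ?thesis using \<phi>_eq assms(4,5) k by (simp add: boxmap_sandwich Kendo_S)
    next
      case False
      then have "\<phi> = W" using \<phi>_eq by (simp add: boxmap_kconst_None)
      moreover have "boxmap n (fab c b) k \<in> R" "boxmap n (fab a x) (\<lambda>y\<in>K. y) \<in> R"
        using assms(4,5) k id_in_S by (simp_all add: fab_boxmap_in_R)
      ultimately show ?thesis by (simp add: rmult_W W_rmult)
    qed
    then show ?thesis ..
  qed
qed

lemma fab_box_related_W:
  assumes cong: "semiring_congruence R radd rmult \<rho>" and rel: "(\<phi>, \<psi>) \<in> \<rho>"
    and x: "x \<noteq> top" "i \<in> {1..n}"
    and not_le: "\<not> leLK n (\<phi> {(x, Some i)}) (\<psi> {(x, Some i)})"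
    and a_nontop: "a \<noteq> top" and g0: "g0 \<in> S"
  shows "(boxmap n (fab a b) g0, W) \<in> \<rho>"
proof -
  have \<phi>: "\<phi> \<in> R" and \<psi>: "\<psi> \<in> R" using congruence_in_carrier[OF cong rel] by auto
  have "\<psi> {(x, Some i)} \<noteq> Aset n" using not_le leLK_Aset R_funcset[OF \<phi>] singleton_in_LK x by metis
  then obtain f' g' j where \<psi>_eq: "\<psi> = boxmap n f' g'" "f' top = top" "g' \<in> S" "j \<in> {1..n}"
    "g' (Some i) = Some j" "f' x \<noteq> top" "\<psi> {(x, Some i)} = {(f' x, Some j)}"
    using R_value_not_Aset \<psi> x by blast
  define k where "k = compose K g0 (restrict (inv_into K g') K)"
  have k: "k \<in> S" unfolding k_def using g0 \<psi>_eq(3) by (intro compose_in_S inverse_in_S)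
  have k_g': "compose K k g' = g0" unfolding k_def using \<psi>_eq(3) g0 by (rule compose_inverse_cancel)
  define sandwich where
    "sandwich \<chi> = rmult (rmult (boxmap n (fab (f' x) b) k) \<chi>) (boxmap n (fab a x) (\<lambda>y\<in>K. y))" for \<chi>
  have "boxmap n (fab (f' x) b) k \<in> R" "boxmap n (fab a x) (\<lambda>y\<in>K. y) \<in> R"
    using \<psi>_eq(6) k a_nontop id_in_S by (simp_all add: fab_boxmap_in_R)
  then have "(sandwich \<phi>, sandwich \<psi>) \<in> \<rho>" unfolding sandwich_def
    by (intro congruence_mult_right[OF cong] congruence_mult_left[OF cong rel])
  moreover have "sandwich \<psi> = boxmap n (fab a b) g0"
    using \<psi>_eq a_nontop k_g' by (simp add: sandwich_def boxmap_sandwich Kendo_S k)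
  ultimately have related: "(boxmap n (fab a b) g0, sandwich \<phi>) \<in> \<rho>"
    using congruence_sym[OF cong] by simp
  have "sandwich \<phi> = W \<or> (\<exists>g\<in>S. g \<noteq> g' \<and> sandwich \<phi> = boxmap n (fab a b) (compose K k g))"
    using sandwich_cases[OF \<phi> x \<psi>_eq(6) a_nontop k \<psi>_eq(3,4,5)] not_le \<psi>_eq(7)
    unfolding sandwich_def by simp
  then show ?thesis
  proof
    assume "sandwich \<phi> = W"
    with related show ?thesis by simp
  next
    assume "\<exists>g\<in>S. g \<noteq> g' \<and> sandwich \<phi> = boxmap n (fab a b) (compose K k g)"
    then obtain g where g: "g \<in> S" "g \<noteq> g'" "sandwich \<phi> = boxmap n (fab a b) (compose K k g)"
      by blast
    have "compose K k g \<noteq> g0" using S_compose_cancel_left[OF k g(1) \<psi>_eq(3)] g(2) k_g' by metis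
    then show ?thesis
      using related g fab_box_related_W_if_related_distinct[OF cong _ a_nontop g0] compose_in_S[OF k]
      by auto
  qed
qed

lemma simple_R: "simple_semiring R radd rmult"
  unfolding simple_semiring_def disj_imp
proof (intro allI impI)
  fix \<rho> assume cong: "semiring_congruence R radd rmult \<rho>" and "\<rho> \<noteq> Id_on R"
  then obtain \<phi> \<psi> where rel: "(\<phi>, \<psi>) \<in> \<rho>" and "\<phi> \<noteq> \<psi>" by (rule congruence_not_Id_on)
  have \<phi>: "\<phi> \<in> R" and \<psi>: "\<psi> \<in> R" using congruence_in_carrier[OF cong rel] by auto
  obtain q where "q \<in> LK n" "\<phi> q \<noteq> \<psi> q"
    using \<open>\<phi> \<noteq> \<psi>\<close> extensionalityI[OF R_extensional[OF \<phi>] R_extensional[OF \<psi>]] by blast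
  moreover have "q \<noteq> Aset n" using \<open>\<phi> q \<noteq> \<psi> q\<close> R_Aset \<phi> \<psi> by auto
  ultimately obtain x i where x: "x \<noteq> top" "i \<in> {1..n}" and q: "q = {(x, Some i)}"
    by (metis LK_cases)
  have fab_W: "(boxmap n (fab a b) g0, W) \<in> \<rho>" if "a \<noteq> top" "g0 \<in> S" for a b g0
  proof (cases "leLK n (\<phi> q) (\<psi> q)")
    case False
    then show ?thesis using fab_box_related_W[OF cong rel x] q that by simp
  next
    case True
    then have "\<not> leLK n (\<psi> q) (\<phi> q)"
      using \<open>\<phi> q \<noteq> \<psi> q\<close> \<open>q \<in> LK n\<close> LK.antisym R_funcset \<phi> \<psi> by metis
    then show ?thesis using fab_box_related_W[OF cong congruence_sym[OF cong rel] x] q that by simp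
  qed
  show "\<rho> = R \<times> R"
  proof (rule congruence_total_if_below_related[OF cong])
    fix \<chi> assume "\<chi> \<in> R"
    then obtain a b g where abg: "a \<noteq> top" "g \<in> S \<union> {kconst K None}"
      "jm_le (LK n) (leLK n) (boxmap n (fab a b) g) \<chi>"
      using R_above_fab_boxmap by blast
    have "radd \<chi> (boxmap n (fab a b) g) = \<chi>"
      using \<open>\<chi> \<in> R\<close> abg by (intro radd_absorb fab_boxmap_in_R)
    moreover have "(boxmap n (fab a b) g, W) \<in> \<rho>"
      using abg fab_W congruence_refl[OF cong W_in_R] by (auto simp: boxmap_kconst_None fab_top)
    ultimately show "\<exists>e. radd \<chi> e = \<chi> \<and> (e, W) \<in> \<rho>" by blast
  qed (rule radd_W)
qed

lemma is_semiring_R: "is_semiring R radd rmult"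
  unfolding is_semiring_def
proof (intro conjI ballI)
  fix r s t assume r: "r \<in> R" and s: "s \<in> R" and t: "t \<in> R"
  show "radd (radd r s) t = radd r (radd s t)"
    by (rule extensionalityI[of _ "LK n"]) (auto simp: jm_add_def LK.sjoin_assoc R_funcset r s t)
  show "radd r s = radd s r"
    by (rule extensionalityI[of _ "LK n"]) (auto simp: jm_add_def LK.sjoin_commute R_funcset r s)
  show "rmult (rmult r s) t = rmult r (rmult s t)"
    using compose_assoc[of t "LK n" "LK n" r s] R_funcset t by (auto simp: jm_mult_def)
  show "rmult r (radd s t) = radd (rmult r s) (rmult r t)"
    by (rule extensionalityI[of _ "LK n"])
      (auto simp: jm_add_def jm_mult_def compose_eq R_funcset R_sjoin r s t)
  show "rmult (radd r s) t = radd (rmult r t) (rmult s t)"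
    by (rule extensionalityI[of _ "LK n"]) (auto simp: jm_add_def jm_mult_def compose_eq R_funcset r s t)
qed (simp_all add: R_nonempty radd_closed rmult_closed)

lemma finite_R: "finite R"
proof (rule finite_subset)
  show "R \<subseteq> LK n \<rightarrow>\<^sub>E LK n" using R_extensional R_funcset by (auto simp: PiE_def)
qed (intro finite_PiE finite_LK)

lemma has_absorbing_greatest_R: "has_absorbing_greatest R radd rmult"
  unfolding has_absorbing_greatest_def using W_in_R radd_W rmult_W W_rmult by blast

lemma add_idempotent_R: "add_idempotent R radd"
  unfolding add_idempotent_def using radd_idem by blast

end

theorem proposition8p4:
  fixes n :: nat
    and S :: "(nat option \<Rightarrow> nat option) set"
    and R :: "(('a::{finite, semilattice_sup, order_top} \<times> nat option) set
                \<Rightarrow> ('a \<times> nat option) set) set"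
  assumes S_sub: "subgroup_AutK n S"
    and S_join: "\<And>f g. f \<in> S \<Longrightarrow> g \<in> S \<Longrightarrow> f \<noteq> g \<Longrightarrow>
                   jm_add (Kset n) leK f g = kconst (Kset n) None"
    and R_sub: "subsemiring R (JM1 (LK n) (leLK n) (Aset n)) (jm_add (LK n) (leLK n)) (jm_mult (LK n))"
    and a: "\<And>\<phi>. \<phi> \<in> R \<Longrightarrow> \<exists>f \<in> JM1 (UNIV :: 'a set) (\<le>) top.
              \<exists>g \<in> S \<union> {kconst (Kset n) None}. \<phi> = boxmap n f g"
    and b: "\<And>a b g. a \<noteq> top \<Longrightarrow> g \<in> S \<union> {kconst (Kset n) None} \<Longrightarrow> boxmap n (fab a b) g \<in> R"
    and c: "\<And>\<phi>. \<phi> \<in> R \<Longrightarrow> \<exists>a b g. a \<noteq> top \<and> g \<in> S \<union> {kconst (Kset n) None} \<and>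
              jm_le (LK n) (leLK n) (boxmap n (fab a b) g) \<phi>"
  shows "finite R \<and> is_semiring R (jm_add (LK n) (leLK n)) (jm_mult (LK n)) \<and>
         simple_semiring R (jm_add (LK n) (leLK n)) (jm_mult (LK n)) \<and>
         add_idempotent R (jm_add (LK n) (leLK n)) \<and>
         has_absorbing_greatest R (jm_add (LK n) (leLK n)) (jm_mult (LK n))"
proof -
  interpret box_semiring n S R
    using assms by unfold_locales
  show ?thesis using finite_R is_semiring_R simple_R add_idempotent_R has_absorbing_greatest_R by blast
qed

end
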